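(* Let $X$ be a subshift and $n\ge2$. If $a_1\dots a_n$ is a significant block of $X$, then $a_1\dots a_{n-1}$ is also a significant block of $X$.
   Context: Let $\mathcal A$ be a finite alphabet and $\sigma$ the shift, $(\sigma x)_i=x_{i+1}$. For a one-sided subshift $X^+\subseteq\mathcal A^{\mathbb N}$ (nonempty, closed, $\sigma$-invariant), the natural extension is $\tilde X=\{x\in\mathcal A^{\mathbb Z}: x_px_{p+1}\dots\in X^+\ \forall p\in\mathbb Z\}$; for a two-sided subshift $X$, $X^+$ is the set of right rays of its points and $\tilde X=X$. For a block $a_{-n}\dots a_0$ occurring in $\tilde X$, $\mathrm{fol}(a_{-n}\dots a_0)=\{b_0b_1\dots\in X^+:\exists b\in\tilde X,\ b_{-n}\dots b_0=a_{-n}\dots a_0\}$. A block $a_{-n}\dots a_0$ occurring in $\tilde X$ with $n\ge1$ is a significant block of $X$ if $\mathrm{fol}(a_{-n}\dots a_0)\subsetneq\mathrm{fol}(a_{-n+1}\dots a_0)$; single symbols occurring in $\tilde X$ are also counted as significant. *)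

theory Defs
  imports Main
begin

text \<open>Closedness in the product topology of the discrete alphabet
  is written out via central/initial cylinders.\<close>

definition shift1 :: "(nat \<Rightarrow> 'a) \<Rightarrow> (nat \<Rightarrow> 'a)" where
  "shift1 x = (\<lambda>i. x (Suc i))"

definition shift2 :: "(int \<Rightarrow> 'a) \<Rightarrow> (int \<Rightarrow> 'a)" where
  "shift2 x = (\<lambda>i. x (i + 1))"

definition closed1 :: "(nat \<Rightarrow> 'a) set \<Rightarrow> bool" where
  "closed1 X \<longleftrightarrow> (\<forall>x. (\<forall>n. \<exists>y\<in>X. \<forall>i<n. y i = x i) \<longrightarrow> x \<in> X)"

definition closed2 :: "(int \<Rightarrow> 'a) set \<Rightarrow> bool" where
  "closed2 X \<longleftrightarrow> (\<forall>x. (\<forall>n::nat. \<exists>y\<in>X. \<forall>i. \<bar>i\<bar> \<le> int n \<longrightarrow> y i = x i) \<longrightarrow> x \<in> X)"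

definition one_sided_subshift :: "(nat \<Rightarrow> 'a::finite) set \<Rightarrow> bool" where
  "one_sided_subshift X \<longleftrightarrow> X \<noteq> {} \<and> closed1 X \<and> shift1 ` X \<subseteq> X"

definition two_sided_subshift :: "(int \<Rightarrow> 'a::finite) set \<Rightarrow> bool" where
  "two_sided_subshift X \<longleftrightarrow> X \<noteq> {} \<and> closed2 X \<and> shift2 ` X = X"

definition ray :: "(int \<Rightarrow> 'a) \<Rightarrow> int \<Rightarrow> (nat \<Rightarrow> 'a)" where
  "ray x p = (\<lambda>k. x (p + int k))"

definition nat_ext :: "(nat \<Rightarrow> 'a) set \<Rightarrow> (int \<Rightarrow> 'a) set" where
  "nat_ext Xp = {x. \<forall>p. ray x p \<in> Xp}"

definition right_rays :: "(int \<Rightarrow> 'a) set \<Rightarrow> (nat \<Rightarrow> 'a) set" where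
  "right_rays X = {ray x p | x p. x \<in> X}"

definition subshift_pair :: "(nat \<Rightarrow> 'a::finite) set \<Rightarrow> (int \<Rightarrow> 'a) set \<Rightarrow> bool" where
  "subshift_pair Xp Xt \<longleftrightarrow>
     (one_sided_subshift Xp \<and> Xt = nat_ext Xp) \<or>
     (two_sided_subshift Xt \<and> Xp = right_rays Xt)"

text \<open>A block is a list w = [a_{-n}, ..., a_0] (length n+1).\<close>
definition occurs :: "(int \<Rightarrow> 'a) set \<Rightarrow> 'a list \<Rightarrow> bool" where
  "occurs Xt w \<longleftrightarrow> (\<exists>x\<in>Xt. \<exists>p. \<forall>i<length w. x (p + int i) = w ! i)"

definition fol :: "(nat \<Rightarrow> 'a) set \<Rightarrow> (int \<Rightarrow> 'a) set \<Rightarrow> 'a list \<Rightarrow> (nat \<Rightarrow> 'a) set" where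
  "fol Xp Xt w = {y \<in> Xp. \<exists>b\<in>Xt.
      (\<forall>i<length w. b (int i - (int (length w) - 1)) = w ! i) \<and> y = ray b 0}"

definition significant :: "(nat \<Rightarrow> 'a) set \<Rightarrow> (int \<Rightarrow> 'a) set \<Rightarrow> 'a list \<Rightarrow> bool" where
  "significant Xp Xt w \<longleftrightarrow> occurs Xt w \<and>
     (length w = 1 \<or> (length w \<ge> 2 \<and> fol Xp Xt w \<subset> fol Xp Xt (tl w)))"

end

theory Submission
  imports Defs
begin

text \<open>Whether a point y continues the block u@[a] depends only on whether
  (last u) y continues u: shift the witness point one step. Hence
  fol (u@[a]) is a function of fol u and last u. Since tl (u@[a]) = tl u @ [a]
  and last (tl u) = last u, an equality fol u = fol (tl u) would propagate to
  fol w = fol (tl w) for w = u@[a], contradicting significance of w.\<close>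

definition ends_with :: "(int \<Rightarrow> 'a) \<Rightarrow> 'a list \<Rightarrow> bool" where
  "ends_with b w \<longleftrightarrow> (\<forall>i<length w. b (int i - (int (length w) - 1)) = w ! i)"

lemma ends_with_Cons: "ends_with b (c # w) \<Longrightarrow> ends_with b w"
proof (unfold ends_with_def, intro allI impI)
  fix i assume "\<forall>i<length (c # w). b (int i - (int (length (c # w)) - 1)) = (c # w) ! i"
    and "i < length w"
  then have "b (int (Suc i) - int (length w)) = w ! i" by fastforce
  then show "b (int i - (int (length w) - 1)) = w ! i" by (simp add: algebra_simps)
qed

lemma ends_with_tl: "ends_with b w \<Longrightarrow> ends_with b (tl w)"
  by (cases w) (auto intro: ends_with_Cons)

lemma ends_with_last:
  assumes "ends_with b w" "w \<noteq> []"
  shows "b 0 = last w"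
proof -
  have "b (int (length w - 1) - (int (length w) - 1)) = w ! (length w - 1)"
    using assms unfolding ends_with_def by simp
  then show ?thesis using assms(2) by (simp add: last_conv_nth of_nat_diff Suc_le_eq)
qed

lemma ends_with_snoc:
  "ends_with b (u @ [a]) \<longleftrightarrow> ends_with (\<lambda>j. b (j - 1)) u \<and> b 0 = a"
proof -
  have "(\<forall>i<Suc (length u). b (int i - int (length u)) = (u @ [a]) ! i) \<longleftrightarrow>
        (\<forall>i<length u. b (int i - int (length u)) = u ! i) \<and> b 0 = a"
    by (auto simp: less_Suc_eq nth_append)
  then show ?thesis
    unfolding ends_with_def by (simp add: algebra_simps)
qed

lemma two_sided_translate_mem:
  assumes "shift2 ` X = X" "x \<in> X"
  shows "(\<lambda>i. x (i + k)) \<in> X"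
proof (induction k rule: int_induct[where k = 0])
  case base
  then show ?case using assms(2) by simp
next
  case (step1 j)
  then have "shift2 (\<lambda>i. x (i + j)) \<in> X" using assms(1) by blast
  then show ?case by (simp add: shift2_def ac_simps)
next
  case (step2 j)
  then obtain z where z: "z \<in> X" "shift2 z = (\<lambda>i. x (i + j))" using assms(1) by (metis imageE)
  moreover have "z = (\<lambda>i. x (i + (j - 1)))"
  proof
    fix i
    have "z ((i - 1) + 1) = x ((i - 1) + j)" using fun_cong[OF z(2), of "i - 1"]
      by (simp add: shift2_def)
    then show "z i = x (i + (j - 1))" by (simp add: algebra_simps)
  qed
  ultimately show ?case by simp
qed

lemma subshift_translate_mem:
  assumes "subshift_pair Xp Xt" "x \<in> Xt"
  shows "(\<lambda>i. x (i + k)) \<in> Xt"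
  using assms(1) unfolding subshift_pair_def
proof (elim disjE conjE)
  assume Xt: "Xt = nat_ext Xp"
  have "ray (\<lambda>i. x (i + k)) p = ray x (p + k)" for p
    by (simp add: ray_def ac_simps)
  then show ?thesis using assms(2) by (simp add: Xt nat_ext_def)
next
  assume "two_sided_subshift Xt"
  then show ?thesis
    using two_sided_translate_mem assms(2) by (auto simp: two_sided_subshift_def)
qed

lemma subshift_ray_mem:
  assumes "subshift_pair Xp Xt" "x \<in> Xt"
  shows "ray x p \<in> Xp"
  using assms unfolding subshift_pair_def nat_ext_def right_rays_def by auto

lemma mem_fol_iff:
  assumes "subshift_pair Xp Xt"
  shows "y \<in> fol Xp Xt w \<longleftrightarrow> (\<exists>b\<in>Xt. ends_with b w \<and> y = ray b 0)"
  using subshift_ray_mem[OF assms] unfolding fol_def ends_with_def by blast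

lemma fol_subset_fol_tl:
  assumes "subshift_pair Xp Xt"
  shows "fol Xp Xt w \<subseteq> fol Xp Xt (tl w)"
  using ends_with_tl by (fastforce simp: mem_fol_iff[OF assms])

lemma fol_snoc:
  assumes "subshift_pair Xp Xt" "u \<noteq> []"
  shows "fol Xp Xt (u @ [a]) = {y. y 0 = a \<and> case_nat (last u) y \<in> fol Xp Xt u}"
proof (intro set_eqI iffI)
  fix y assume "y \<in> fol Xp Xt (u @ [a])"
  then obtain b where b: "b \<in> Xt" "ends_with b (u @ [a])" "y = ray b 0"
    by (auto simp: mem_fol_iff[OF assms(1)])
  let ?b' = "\<lambda>j. b (j - 1)"
  have "?b' \<in> Xt" using subshift_translate_mem[OF assms(1) b(1), of "-1"] by simp
  moreover have "ends_with ?b' u" and "b 0 = a" using b(2) by (simp_all add: ends_with_snoc)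
  moreover have "b (- 1) = last u"
    using ends_with_last[OF \<open>ends_with ?b' u\<close> assms(2)] by simp
  then have "case_nat (last u) y = ray ?b' 0"
    using b(3) by (auto simp: ray_def split: nat.split)
  ultimately show "y \<in> {y. y 0 = a \<and> case_nat (last u) y \<in> fol Xp Xt u}"
    using b(3) by (auto simp: ray_def mem_fol_iff[OF assms(1)])
next
  fix y assume "y \<in> {y. y 0 = a \<and> case_nat (last u) y \<in> fol Xp Xt u}"
  then obtain c where y: "y 0 = a" "c \<in> Xt" "ends_with c u" "case_nat (last u) y = ray c 0"
    by (auto simp: mem_fol_iff[OF assms(1)])
  let ?b = "\<lambda>j. c (j + 1)"
  have "?b \<in> Xt" using subshift_translate_mem[OF assms(1) y(2)] .
  moreover have "y = ray ?b 0"
  proof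
    fix k
    have "case_nat (last u) y (Suc k) = ray c 0 (Suc k)" using y(4) by simp
    then show "y k = ray ?b 0 k" by (simp add: ray_def ac_simps)
  qed
  moreover have "ends_with ?b (u @ [a])"
    using y(1,3) \<open>y = ray ?b 0\<close> by (simp add: ends_with_snoc ray_def)
  ultimately show "y \<in> fol Xp Xt (u @ [a])" by (auto simp: mem_fol_iff[OF assms(1)])
qed

lemma fol_snoc_cong:
  assumes "subshift_pair Xp Xt" "u \<noteq> []" "v \<noteq> []"
    and "fol Xp Xt u = fol Xp Xt v" "last u = last v"
  shows "fol Xp Xt (u @ [a]) = fol Xp Xt (v @ [a])"
  using assms by (simp add: fol_snoc)

lemma occurs_butlast: "occurs Xt w \<Longrightarrow> occurs Xt (butlast w)"
  unfolding occurs_def by (metis length_butlast less_diff_conv nth_butlast add_lessD1)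

theorem lemma3p9:
  fixes Xp :: "(nat \<Rightarrow> 'a::finite) set" and Xt :: "(int \<Rightarrow> 'a) set" and w :: "'a list"
  assumes "subshift_pair Xp Xt"
    and "length w \<ge> 2"
    and "significant Xp Xt w"
  shows "significant Xp Xt (butlast w)"
proof -
  define u where "u = butlast w"
  have "w \<noteq> []" using assms(2) by auto
  then have w: "w = u @ [last w]" unfolding u_def by simp
  have "length u \<ge> 1" using assms(2) unfolding u_def by simp
  have strict: "fol Xp Xt w \<subset> fol Xp Xt (tl w)" using assms(2,3) by (simp add: significant_def)
  have occ: "occurs Xt u" using assms(3) occurs_butlast by (auto simp: significant_def u_def)
  show ?thesis
  proof (cases "length u = 1")
    case True
    then show ?thesis using occ by (simp add: significant_def u_def)
  next
    case False
    then have "length u \<ge> 2" "tl u \<noteq> []" "u \<noteq> []"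
      using \<open>length u \<ge> 1\<close> by (auto simp flip: length_greater_0_conv)
    have "fol Xp Xt u \<noteq> fol Xp Xt (tl u)"
    proof
      assume "fol Xp Xt u = fol Xp Xt (tl u)"
      moreover have "last u = last (tl u)" using \<open>tl u \<noteq> []\<close> by (simp add: last_tl)
      ultimately have "fol Xp Xt (u @ [last w]) = fol Xp Xt (tl u @ [last w])"
        by (rule fol_snoc_cong[OF assms(1) \<open>u \<noteq> []\<close> \<open>tl u \<noteq> []\<close>])
      then show False using strict w \<open>u \<noteq> []\<close> by (metis psubset_eq tl_append_if)
    qed
    then show ?thesis
      using fol_subset_fol_tl[OF assms(1)] occ \<open>length u \<ge> 2\<close>
      by (auto simp: significant_def u_def)
  qed
qed

end
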